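(* Let $m\in\mathbb{N}$, let $\mathbb{R}^m$ carry a norm, let $\mathcal{Y}\subseteq\mathbb{R}^m$ be bounded and let $\mathfrak{C}$ be a simplicial cover of $\mathcal{Y}$. Let $\{g_{\boldsymbol{v}}:\boldsymbol{v}\in V(\mathfrak{C})\}$ be the barycentric vertex interpolation function set for $\mathfrak{C}$, let $\{g_1,\ldots,g_k\}$ be obtained by removing one function from it, and let $\boldsymbol{g}:\mathcal{Y}\to\mathbb{R}^k$, $\boldsymbol{g}(\boldsymbol{x}):=(g_1(\boldsymbol{x}),\ldots,g_k(\boldsymbol{x}))^\top$. Assume $\operatorname{int}(\mathcal{Y})\cap\operatorname{int}(C)\ne\emptyset$ for all $C\in\mathfrak{C}$. Then there exist $\boldsymbol{x}_1,\ldots,\boldsymbol{x}_{k+1}\in\mathcal{Y}$ such that $\boldsymbol{g}(\boldsymbol{x}_1),\ldots,\boldsymbol{g}(\boldsymbol{x}_{k+1})$ are affinely independent.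
   Context: Faces: a convex $C'\subseteq C$ is a face of convex $C$ if $\lambda x_1+(1-\lambda)x_2\in C'$ ($0<\lambda<1$, $x_1,x_2\in C$) implies $x_1,x_2\in C'$; $V(C)$ is the set of extreme points. A simplicial cover of a bounded $\mathcal{Y}\subseteq\mathbb{R}^m$ is a finite collection $\mathfrak{C}$ of $m$-simplices whose union contains $\mathcal{Y}$ such that any two members with non-empty intersection intersect in a face of both. $\mathfrak{F}(\mathfrak{C})$: non-empty faces of members; $V(\mathfrak{C}):=\bigcup_{C}V(C)$. Every point $\boldsymbol{x}\in\bigcup_{C\in\mathfrak{C}}C$ lies in $\operatorname{relint}(F)$ for a unique $F\in\mathfrak{F}(\mathfrak{C})$ and has a unique representation $\boldsymbol{x}=\sum_{\boldsymbol{w}\in V(F)}\lambda^F_{\boldsymbol{w}}(\boldsymbol{x})\boldsymbol{w}$ with positive weights summing to $1$; the barycentric vertex interpolation function set is defined by $g_{\boldsymbol{v}}(\boldsymbol{x}):=\lambda^F_{\boldsymbol{v}}(\boldsymbol{x})$ if $\boldsymbol{v}\in V(F)$ and $g_{\boldsymbol{v}}(\boldsymbol{x}):=0$ otherwise, for $\boldsymbol{v}\in V(\mathfrak{C})$. *)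

theory Defs
  imports "HOL-Analysis.Analysis"
begin

definition simplicial_cover :: "'a::euclidean_space set set \<Rightarrow> 'a set \<Rightarrow> bool" where
  "simplicial_cover CC Y \<longleftrightarrow>
     finite CC \<and> (\<forall>C\<in>CC. int DIM('a) simplex C) \<and> Y \<subseteq> \<Union>CC \<and>
     (\<forall>C\<in>CC. \<forall>D\<in>CC. C \<inter> D \<noteq> {} \<longrightarrow> (C \<inter> D) face_of C \<and> (C \<inter> D) face_of D)"

definition cover_faces :: "'a::euclidean_space set set \<Rightarrow> 'a set set" where
  "cover_faces CC = {F. F \<noteq> {} \<and> (\<exists>C\<in>CC. F face_of C)}"

definition extreme_points :: "'a::real_vector set \<Rightarrow> 'a set" where
  "extreme_points C = {v. v extreme_point_of C}"

definition cover_vertices :: "'a::euclidean_space set set \<Rightarrow> 'a set" where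
  "cover_vertices CC = (\<Union>C\<in>CC. extreme_points C)"

text \<open>The barycentric vertex interpolation function g_v: for x, take the unique
  face F of the cover with x in relint F and the unique positive barycentric weights
  of x w.r.t. V(F); g_v(x) is the weight of v if v is a vertex of F, else 0.
  (The weight function is normalized to be 0 off V(F), so the value at v is
  exactly as in the paper.)\<close>
definition bary_interp :: "'a::euclidean_space set set \<Rightarrow> 'a \<Rightarrow> 'a \<Rightarrow> real" where
  "bary_interp CC v x =
     (let F = (THE F. F \<in> cover_faces CC \<and> x \<in> rel_interior F);
          lam = (THE lam. (\<forall>w\<in>extreme_points F. lam w > 0) \<and>
                          (\<forall>w. w \<notin> extreme_points F \<longrightarrow> lam w = 0) \<and>
                          (\<Sum>w\<in>extreme_points F. lam w) = 1 \<and>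
                          (\<Sum>w\<in>extreme_points F. lam w *\<^sub>R w) = x)
      in lam v)"

text \<open>Affine independence of a finite family p_1,...,p_n of points of R^I, where a
  point is given by its coordinates p i j, j \<in> I.\<close>
definition affinely_independent_family :: "nat \<Rightarrow> (nat \<Rightarrow> 'b \<Rightarrow> real) \<Rightarrow> 'b set \<Rightarrow> bool" where
  "affinely_independent_family n p I \<longleftrightarrow>
     (\<forall>c::nat \<Rightarrow> real. (\<Sum>i=1..n. c i) = 0 \<and> (\<forall>j\<in>I. (\<Sum>i=1..n. c i * p i j) = 0)
        \<longrightarrow> (\<forall>i\<in>{1..n}. c i = 0))"

end

theory Submission
  imports Defs "HOL-Library.Function_Algebras"
begin

(* On the interior of a simplex C of the cover the interpolation functions are the barycentric
   coordinates with respect to the vertices of C. A small step t from a point p of int Y and int C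
   towards a vertex v of C moves the coordinate vector from g(p) to (1 - t) g(p) + t e_v, so the
   unit vector e_v lies in the linear span of the values g(x), x in Y. Hence |V| of these values are
   linearly independent, V being the vertex set of the cover. Their coordinates sum to 1, so after
   dropping one coordinate they are still affinely independent. *)

(* The function type has no real_vector instance, hence the locale interpretation. *)

definition scale_fun :: "real \<Rightarrow> ('a \<Rightarrow> real) \<Rightarrow> 'a \<Rightarrow> real" where
  "scale_fun r f = (\<lambda>x. r * f x)"

interpretation real_fun: vector_space scale_fun
  by unfold_locales (auto simp: scale_fun_def plus_fun_def algebra_simps)

lemma sum_scale_fun: "(\<Sum>i\<in>I. scale_fun (c i) (f i)) = (\<lambda>x. \<Sum>i\<in>I. c i * f i x)"
  by (induction I rule: infinite_finite_induct) (auto simp: scale_fun_def plus_fun_def zero_fun_def)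

lemma real_fun_independent_indicators:
  "real_fun.independent ((\<lambda>v. indicator {v}) ` V :: ('a \<Rightarrow> real) set)"
  unfolding real_fun.independent_explicit_finite_subsets
proof (intro allI impI ballI)
  fix S u and e :: "'a \<Rightarrow> real"
  assume S: "S \<subseteq> (\<lambda>v. indicator {v}) ` V" "finite S"
    and sum0: "(\<Sum>f\<in>S. scale_fun (u f) f) = 0" and "e \<in> S"
  then obtain a where a: "e = indicator {a}" by auto
  have "u f * f a = (if f = e then u f else 0)" if "f \<in> S" for f
    using that S a by (auto simp: indicator_def fun_eq_iff)
  then have "(\<Sum>f\<in>S. u f * f a) = (\<Sum>f\<in>S. if f = e then u f else 0)"
    by (rule sum.cong[OF refl])
  moreover have "(\<Sum>f\<in>S. u f * f a) = 0"
    using fun_cong[OF sum0, of a] by (simp add: sum_scale_fun)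
  ultimately show "u e = 0" using \<open>e \<in> S\<close> S(2) by simp
qed

context vector_space
begin

lemma obtain_independent_subset_with_card:
  assumes "independent A" "A \<subseteq> span S"
  obtains B where "B \<subseteq> S" "finite B" "card B = card A" "independent B"
proof -
  obtain B0 where B0: "B0 \<subseteq> S" "independent B0" "S \<subseteq> span B0"
    using maximal_independent_subset by blast
  have "A \<subseteq> span B0"
    using assms(2) span_minimal[OF B0(3) subspace_span] by (rule order_trans)
  have "\<exists>B \<subseteq> B0. finite B \<and> card B = card A"
  proof (cases "finite B0")
    case True
    then have "card A \<le> card B0"
      using independent_span_bound[OF True assms(1) \<open>A \<subseteq> span B0\<close>] by simp
    then show ?thesis by (meson obtain_subset_with_card_n)
  next
    case False
    then show ?thesis by (meson infinite_arbitrarily_large)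
  qed
  then obtain B where "B \<subseteq> B0" "finite B" "card B = card A" by blast
  then show ?thesis
    using that[of B] B0(1,2) independent_mono by blast
qed

lemma independent_family_scalars_zero:
  assumes "independent B" "bij_betw h I B" "finite I"
    and "(\<Sum>i\<in>I. scale (c i) (h i)) = 0" "i \<in> I"
  shows "c i = 0"
proof -
  have "(\<Sum>b\<in>B. scale (c (inv_into I h b)) b) = (\<Sum>i\<in>I. scale (c (inv_into I h (h i))) (h i))"
    by (rule sum.reindex_bij_betw[OF assms(2), symmetric])
  also have "\<dots> = 0"
    using assms(4) bij_betw_inv_into_left[OF assms(2)] by (simp cong: sum.cong)
  finally have sum0: "(\<Sum>b\<in>B. scale (c (inv_into I h b)) b) = 0" .
  have "finite B" "h i \<in> B"
    using bij_betw_finite[OF assms(2)] assms(3) bij_betwE[OF assms(2)] assms(5) by auto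
  then have "c (inv_into I h (h i)) = 0"
    using independentD[OF assms(1) \<open>finite B\<close> subset_refl sum0] by blast
  then show ?thesis
    using bij_betw_inv_into_left[OF assms(2) assms(5)] by simp
qed

lemma obtain_independent_family:
  assumes "independent A" "card A = n" "A \<subseteq> span (f ` X)"
  obtains x where "\<And>i. i \<in> {1..n} \<Longrightarrow> x i \<in> X"
    and "\<And>c. (\<Sum>i=1..n. scale (c i) (f (x i))) = 0 \<Longrightarrow> \<forall>i\<in>{1..n}. c i = 0"
proof -
  obtain B where B: "B \<subseteq> f ` X" "finite B" "card B = n" "independent B"
    using obtain_independent_subset_with_card[OF assms(1,3)] unfolding assms(2) by blast
  obtain h where h: "bij_betw h {1..n} B"
    using ex_bij_betw_nat_finite_1[OF B(2)] unfolding B(3) by blast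
  have "\<forall>i\<in>{1..n}. \<exists>y\<in>X. h i = f y"
    using B(1) bij_betwE[OF h] by blast
  then obtain x where x: "\<And>i. i \<in> {1..n} \<Longrightarrow> x i \<in> X \<and> h i = f (x i)"
    by metis
  show ?thesis
  proof (rule that)
    show "x i \<in> X" if "i \<in> {1..n}" for i using x that by blast
    fix c assume "(\<Sum>i=1..n. scale (c i) (f (x i))) = 0"
    moreover have "(\<Sum>i=1..n. scale (c i) (f (x i))) = (\<Sum>i=1..n. scale (c i) (h i))"
      using x by (intro sum.cong) auto
    ultimately have "(\<Sum>i=1..n. scale (c i) (h i)) = 0" by simp
    then show "\<forall>i\<in>{1..n}. c i = 0"
      using independent_family_scalars_zero[OF B(4) h] by blast
  qed
qed

end

lemma affinely_independent_family_drop_coordinate: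
  fixes p :: "nat \<Rightarrow> 'b \<Rightarrow> real"
  assumes "finite V" "v0 \<in> V"
    and supp: "\<And>i j. i \<in> {1..n} \<Longrightarrow> j \<notin> V \<Longrightarrow> p i j = 0"
    and sum_one: "\<And>i. i \<in> {1..n} \<Longrightarrow> (\<Sum>j\<in>V. p i j) = 1"
    and lin_indep: "\<And>c. \<forall>j. (\<Sum>i=1..n. c i * p i j) = 0 \<Longrightarrow> \<forall>i\<in>{1..n}. c i = 0"
  shows "affinely_independent_family n p (V - {v0})"
  unfolding affinely_independent_family_def
proof (intro allI impI)
  fix c :: "nat \<Rightarrow> real"
  assume "(\<Sum>i=1..n. c i) = 0 \<and> (\<forall>j\<in>V - {v0}. (\<Sum>i=1..n. c i * p i j) = 0)"
  then have sum0: "(\<Sum>i=1..n. c i) = 0" and coord0: "\<And>j. j \<in> V - {v0} \<Longrightarrow> (\<Sum>i=1..n. c i * p i j) = 0"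
    by auto
  have "p i v0 = 1 - (\<Sum>j\<in>V - {v0}. p i j)" if "i \<in> {1..n}" for i
    using sum_one[OF that] sum.remove[OF assms(1,2), of "p i"] by linarith
  then have "(\<Sum>i=1..n. c i * p i v0) = (\<Sum>i=1..n. c i * (1 - (\<Sum>j\<in>V - {v0}. p i j)))"
    by (intro sum.cong) auto
  also have "\<dots> = (\<Sum>i=1..n. c i) - (\<Sum>j\<in>V - {v0}. \<Sum>i=1..n. c i * p i j)"
    by (simp add: right_diff_distrib sum_subtractf sum_distrib_left sum.swap[of _ "V - {v0}"])
  finally have "(\<Sum>i=1..n. c i * p i v0) = 0"
    using sum0 coord0 by simp
  moreover have "(\<Sum>i=1..n. c i * p i j) = 0" if "j \<notin> V" for j
    using supp that by simp
  ultimately show "\<forall>i\<in>{1..n}. c i = 0"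
    using lin_indep coord0 by (metis Diff_iff singletonD)
qed

definition barycentric_weights :: "'a::real_vector set \<Rightarrow> 'a \<Rightarrow> ('a \<Rightarrow> real) \<Rightarrow> bool" where
  "barycentric_weights T x l \<longleftrightarrow> (\<forall>w\<in>T. l w > 0) \<and> (\<forall>w. w \<notin> T \<longrightarrow> l w = 0) \<and>
     (\<Sum>w\<in>T. l w) = 1 \<and> (\<Sum>w\<in>T. l w *\<^sub>R w) = x"

lemma barycentric_weights_finite: "barycentric_weights T x l \<Longrightarrow> finite T"
  unfolding barycentric_weights_def by (metis sum.infinite zero_neq_one)

lemma barycentric_weights_unique:
  assumes "\<not> affine_dependent T" "barycentric_weights T x l" "barycentric_weights T x l'"
  shows "l = l'"
proof -
  have "finite T" using assms(2) barycentric_weights_finite by blast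
  have "(\<Sum>w\<in>T. l w - l' w) = 0" "(\<Sum>w\<in>T. (l w - l' w) *\<^sub>R w) = 0"
    using assms(2,3) by (simp_all add: barycentric_weights_def sum_subtractf scaleR_diff_left)
  then have "\<forall>w\<in>T. l w - l' w = 0"
    using assms(1) affine_dependent_explicit_finite[OF \<open>finite T\<close>] by blast
  then show ?thesis
    using assms(2,3) unfolding barycentric_weights_def fun_eq_iff by (metis eq_iff_diff_eq_0)
qed

lemma barycentric_weights_exists:
  fixes T :: "'a::euclidean_space set"
  assumes "\<not> affine_dependent T" "x \<in> rel_interior (convex hull T)"
  shows "\<exists>l. barycentric_weights T x l"
proof -
  obtain u where u: "\<forall>w\<in>T. 0 < u w" "sum u T = 1" "(\<Sum>w\<in>T. u w *\<^sub>R w) = x"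
    using assms rel_interior_convex_hull_explicit by blast
  have "barycentric_weights T x (\<lambda>w. if w \<in> T then u w else 0)"
    using u unfolding barycentric_weights_def by (simp cong: sum.cong)
  then show ?thesis by blast
qed

lemma barycentric_weights_towards_vertex:
  assumes "barycentric_weights T p l" "w \<in> T" "0 \<le> t" "t < 1"
  shows "barycentric_weights T ((1 - t) *\<^sub>R p + t *\<^sub>R w) (\<lambda>v. (1 - t) * l v + t * indicator {w} v)"
proof -
  have "finite T" using assms(1) barycentric_weights_finite by blast
  have indicator_sum: "(\<Sum>v\<in>T. indicator {w} v) = (1::real)"
    using \<open>finite T\<close> assms(2) by (simp add: indicator_def)
  have "(\<Sum>v\<in>T. indicator {w} v *\<^sub>R v) = (\<Sum>v\<in>T. if v = w then w else 0)"
    by (intro sum.cong) (auto simp: indicator_def)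
  also have "\<dots> = w"
    using \<open>finite T\<close> assms(2) by simp
  finally have indicator_comb: "(\<Sum>v\<in>T. indicator {w} v *\<^sub>R v) = w" .
  have pos: "\<forall>v\<in>T. l v > 0" and zero: "\<forall>v. v \<notin> T \<longrightarrow> l v = 0"
    and sum: "(\<Sum>v\<in>T. l v) = 1" and comb: "(\<Sum>v\<in>T. l v *\<^sub>R v) = p"
    using assms(1) unfolding barycentric_weights_def by auto
  show ?thesis
    unfolding barycentric_weights_def
  proof (intro conjI)
    show "\<forall>v\<in>T. 0 < (1 - t) * l v + t * indicator {w} v"
      using pos assms(3,4) by (simp add: add_pos_nonneg)
    show "\<forall>v. v \<notin> T \<longrightarrow> (1 - t) * l v + t * indicator {w} v = 0"
      using zero assms(2) by (auto simp: indicator_def)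
    show "(\<Sum>v\<in>T. (1 - t) * l v + t * indicator {w} v) = 1"
      using sum indicator_sum by (simp add: sum.distrib flip: sum_distrib_left)
    show "(\<Sum>v\<in>T. ((1 - t) * l v + t * indicator {w} v) *\<^sub>R v) = (1 - t) *\<^sub>R p + t *\<^sub>R w"
      using comb indicator_comb
      by (simp add: scaleR_add_left sum.distrib flip: scaleR_scaleR scaleR_sum_right)
  qed
qed

lemma extreme_points_convex_hull_affine_independent:
  fixes T :: "'a::euclidean_space set"
  shows "\<not> affine_dependent T \<Longrightarrow> extreme_points (convex hull T) = T"
  by (auto simp: extreme_points_def extreme_point_of_convex_hull_affine_independent)

lemma simplicial_cover_simplex:
  assumes "simplicial_cover CC Y" "C \<in> CC"
  obtains T where "\<not> affine_dependent T" "C = convex hull T"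
  using assms unfolding simplicial_cover_def simplex_def by blast

lemma finite_cover_vertices:
  assumes "simplicial_cover CC Y"
  shows "finite (cover_vertices CC)"
proof -
  have "finite (extreme_points C)" if "C \<in> CC" for C
    using simplicial_cover_simplex[OF assms that]
    by (metis extreme_points_convex_hull_affine_independent aff_independent_finite)
  moreover have "finite CC" using assms unfolding simplicial_cover_def by blast
  ultimately show ?thesis unfolding cover_vertices_def by blast
qed

lemma simplicial_cover_Int_face_of:
  assumes "simplicial_cover CC Y" "C \<in> CC" "D \<in> CC" "C \<inter> D \<noteq> {}"
  shows "(C \<inter> D) face_of C" "(C \<inter> D) face_of D"
  using assms unfolding simplicial_cover_def by blast+

lemma cover_face_at_interior_point:
  assumes cov: "simplicial_cover CC Y" and "C \<in> CC" and x: "x \<in> interior C"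
  shows "(THE F. F \<in> cover_faces CC \<and> x \<in> rel_interior F) = C"
proof (rule the_equality)
  have "convex C"
    using simplicial_cover_simplex[OF cov \<open>C \<in> CC\<close>] by (metis convex_convex_hull)
  have ri: "rel_interior C = interior C"
    using x rel_interior_nonempty_interior by blast
  then show "C \<in> cover_faces CC \<and> x \<in> rel_interior C"
    using \<open>C \<in> CC\<close> x face_of_refl[OF \<open>convex C\<close>] unfolding cover_faces_def by auto
  fix F assume F: "F \<in> cover_faces CC \<and> x \<in> rel_interior F"
  then obtain D where "D \<in> CC" "F face_of D"
    unfolding cover_faces_def by blast
  then have "x \<in> C \<inter> D"
    using F x rel_interior_subset face_of_imp_subset interior_subset by blast
  then have faces: "(C \<inter> D) face_of C" "(C \<inter> D) face_of D"
    using simplicial_cover_Int_face_of[OF cov \<open>C \<in> CC\<close> \<open>D \<in> CC\<close>] by blast+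
  have "C \<inter> D = C"
    using face_of_disjoint_rel_interior[OF faces(1)] \<open>x \<in> C \<inter> D\<close> x ri by blast
  then have "C face_of D"
    using faces(2) by simp
  moreover have "x \<in> rel_interior F \<inter> rel_interior C"
    using F x ri by blast
  ultimately show "F = C"
    using face_of_eq[OF \<open>F face_of D\<close>] by blast
qed

lemma barycentric_weights_bary_interp:
  assumes "simplicial_cover CC Y" "C \<in> CC" "\<not> affine_dependent T" "C = convex hull T"
    and x: "x \<in> interior C"
  shows "barycentric_weights T x (\<lambda>v. bary_interp CC v x)"
proof -
  have "x \<in> rel_interior (convex hull T)"
    using x rel_interior_nonempty_interior assms(4) by blast
  then have "barycentric_weights T x (THE l. barycentric_weights T x l)"
    using theI' barycentric_weights_exists[OF assms(3)] barycentric_weights_unique[OF assms(3)]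
    by (metis (no_types, lifting))
  moreover have "(\<lambda>v. bary_interp CC v x) = (THE l. barycentric_weights T x l)"
    unfolding bary_interp_def Let_def cover_face_at_interior_point[OF assms(1,2) x]
      assms(4) extreme_points_convex_hull_affine_independent[OF assms(3)] barycentric_weights_def
    by simp
  ultimately show ?thesis by simp
qed

lemma bary_interp_interior:
  assumes "simplicial_cover CC Y" "C \<in> CC" "x \<in> interior C"
  shows "(\<Sum>v\<in>cover_vertices CC. bary_interp CC v x) = 1"
    and "v \<notin> cover_vertices CC \<Longrightarrow> bary_interp CC v x = 0"
proof -
  obtain T where T: "\<not> affine_dependent T" "C = convex hull T"
    using simplicial_cover_simplex[OF assms(1,2)] by blast
  then have weights: "barycentric_weights T x (\<lambda>v. bary_interp CC v x)"
    using barycentric_weights_bary_interp assms by blast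
  have "T \<subseteq> cover_vertices CC"
    using T assms(2) extreme_points_convex_hull_affine_independent
    unfolding cover_vertices_def by blast
  then show "v \<notin> cover_vertices CC \<Longrightarrow> bary_interp CC v x = 0"
    using weights unfolding barycentric_weights_def by blast
  have "(\<Sum>v\<in>cover_vertices CC. bary_interp CC v x) = (\<Sum>v\<in>T. bary_interp CC v x)"
    using weights \<open>T \<subseteq> cover_vertices CC\<close> finite_cover_vertices[OF assms(1)]
    unfolding barycentric_weights_def by (intro sum.mono_neutral_right) auto
  then show "(\<Sum>v\<in>cover_vertices CC. bary_interp CC v x) = 1"
    using weights unfolding barycentric_weights_def by simp
qed

lemma obtain_segment_point_in_open:
  fixes p v :: "'a::real_normed_vector"
  assumes "open U" "p \<in> U"
  obtains t where "0 < t" "t < 1" "(1 - t) *\<^sub>R p + t *\<^sub>R v \<in> U"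
proof -
  have "((\<lambda>t. (1 - t) *\<^sub>R p + t *\<^sub>R v) \<longlongrightarrow> p) (at_right 0)"
    by (auto intro!: tendsto_eq_intros)
  then have "\<forall>\<^sub>F t in at_right 0. (1 - t) *\<^sub>R p + t *\<^sub>R v \<in> U"
    using assms topological_tendstoD by blast
  moreover have "\<forall>\<^sub>F t in at_right (0::real). 0 < t \<and> t < 1"
    unfolding eventually_at_right_field by (auto intro!: exI[of _ 1])
  ultimately have "\<forall>\<^sub>F t in at_right 0. (1 - t) *\<^sub>R p + t *\<^sub>R v \<in> U \<and> 0 < t \<and> t < 1"
    by (rule eventually_conj)
  then obtain t where "(1 - t) *\<^sub>R p + t *\<^sub>R v \<in> U \<and> 0 < t \<and> t < 1"
    using eventually_happens'[OF trivial_limit_at_right_real] by blast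
  then show ?thesis using that by blast
qed

lemma indicator_in_span_bary_interp:
  assumes cov: "simplicial_cover CC Y" and "C \<in> CC" "v \<in> extreme_points C"
    and "interior S \<inter> interior C \<noteq> {}"
  shows "indicator {v} \<in> real_fun.span ((\<lambda>x w. bary_interp CC w x) ` (S \<inter> interior C))"
proof -
  let ?b = "\<lambda>x w. bary_interp CC w x"
  obtain T where T: "\<not> affine_dependent T" "C = convex hull T"
    using simplicial_cover_simplex[OF cov \<open>C \<in> CC\<close>] by blast
  have "v \<in> T" using assms(3) T extreme_points_convex_hull_affine_independent by blast
  obtain p where p: "p \<in> interior S \<inter> interior C" using assms(4) by blast
  then obtain t where t: "0 < t" "t < 1" "(1 - t) *\<^sub>R p + t *\<^sub>R v \<in> interior S \<inter> interior C"
    using obtain_segment_point_in_open[of "interior S \<inter> interior C"] by blast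
  define q where "q = (1 - t) *\<^sub>R p + t *\<^sub>R v"
  have weights_p: "barycentric_weights T p (?b p)"
    using barycentric_weights_bary_interp[OF cov \<open>C \<in> CC\<close> T] p by blast
  have "barycentric_weights T q (?b q)"
    using barycentric_weights_bary_interp[OF cov \<open>C \<in> CC\<close> T] t(3) unfolding q_def by blast
  then have "?b q = (\<lambda>w. (1 - t) * ?b p w + t * indicator {v} w)"
    using barycentric_weights_unique[OF T(1)] barycentric_weights_towards_vertex[OF weights_p \<open>v \<in> T\<close>]
      t unfolding q_def by simp
  then have "indicator {v} = scale_fun (1 / t) (?b q - scale_fun (1 - t) (?b p))"
    using t by (auto simp: scale_fun_def fun_eq_iff field_simps)
  moreover have "p \<in> S \<inter> interior C" "q \<in> S \<inter> interior C"
    using p t(3) interior_subset unfolding q_def by blast+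
  then have "?b p \<in> real_fun.span (?b ` (S \<inter> interior C))" "?b q \<in> real_fun.span (?b ` (S \<inter> interior C))"
    by (auto intro: real_fun.span_base)
  ultimately show ?thesis
    by (simp only:) (intro real_fun.span_scale real_fun.span_diff)
qed

lemma indicators_subset_span_bary_interp:
  assumes "simplicial_cover CC Y" "\<forall>C\<in>CC. interior Y \<inter> interior C \<noteq> {}"
  shows "(\<lambda>v. indicator {v}) ` cover_vertices CC
    \<subseteq> real_fun.span ((\<lambda>x w. bary_interp CC w x) ` (Y \<inter> \<Union>(interior ` CC)))"
proof clarify
  fix v assume "v \<in> cover_vertices CC"
  then obtain C where C: "C \<in> CC" "v \<in> extreme_points C"
    unfolding cover_vertices_def by blast
  then have "indicator {v} \<in> real_fun.span ((\<lambda>x w. bary_interp CC w x) ` (Y \<inter> interior C))"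
    using indicator_in_span_bary_interp[OF assms(1)] assms(2) by blast
  moreover have "Y \<inter> interior C \<subseteq> Y \<inter> \<Union>(interior ` CC)"
    using C(1) by blast
  ultimately show "indicator {v} \<in> real_fun.span ((\<lambda>x w. bary_interp CC w x) ` (Y \<inter> \<Union>(interior ` CC)))"
    using real_fun.span_mono[OF image_mono] by blast
qed

lemma inj_indicator_singleton: "inj (\<lambda>v. indicator {v} :: 'a \<Rightarrow> real)"
proof (rule injI)
  fix u w assume "indicator {u} = (indicator {w} :: 'a \<Rightarrow> real)"
  then have "indicator {u} u = (indicator {w} u :: real)" by simp
  then show "u = w" by (simp add: indicator_def split: if_splits)
qed

lemma affinely_independent_bary_interp:
  assumes cov: "simplicial_cover CC Y" and "v0 \<in> cover_vertices CC"
    and x: "\<And>i. i \<in> {1..n} \<Longrightarrow> x i \<in> \<Union>(interior ` CC)"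
    and indep: "\<And>c. (\<Sum>i=1..n. scale_fun (c i) (\<lambda>v. bary_interp CC v (x i))) = 0 \<Longrightarrow> \<forall>i\<in>{1..n}. c i = 0"
  shows "affinely_independent_family n (\<lambda>i v. bary_interp CC v (x i)) (cover_vertices CC - {v0})"
proof (rule affinely_independent_family_drop_coordinate[OF finite_cover_vertices[OF cov] assms(2)])
  fix i assume "i \<in> {1..n}"
  then obtain C where "C \<in> CC" "x i \<in> interior C"
    using x by blast
  from bary_interp_interior[OF cov this]
  show "\<And>j. j \<notin> cover_vertices CC \<Longrightarrow> bary_interp CC j (x i) = 0"
    "(\<Sum>j\<in>cover_vertices CC. bary_interp CC j (x i)) = 1"
    by auto
next
  fix c assume "\<forall>j. (\<Sum>i=1..n. c i * bary_interp CC j (x i)) = 0"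
  then show "\<forall>i\<in>{1..n}. c i = 0"
    using indep by (simp add: sum_scale_fun fun_eq_iff)
qed

theorem proposition3p11:
  fixes Y :: "'a::euclidean_space set" and CC :: "'a set set" and v0 :: 'a
  assumes "bounded Y"
    and "simplicial_cover CC Y"
    and "v0 \<in> cover_vertices CC"
    and "\<forall>C\<in>CC. interior Y \<inter> interior C \<noteq> {}"
  shows "\<exists>x :: nat \<Rightarrow> 'a. (\<forall>i\<in>{1..card (cover_vertices CC - {v0}) + 1}. x i \<in> Y) \<and>
           affinely_independent_family (card (cover_vertices CC - {v0}) + 1)
             (\<lambda>i v. bary_interp CC v (x i)) (cover_vertices CC - {v0})"
proof -
  define V where "V = cover_vertices CC"
  obtain x where x: "\<And>i. i \<in> {1..card V} \<Longrightarrow> x i \<in> Y \<inter> \<Union>(interior ` CC)"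
    and indep: "\<And>c. (\<Sum>i=1..card V. scale_fun (c i) (\<lambda>v. bary_interp CC v (x i))) = 0
      \<Longrightarrow> \<forall>i\<in>{1..card V}. c i = 0"
    using real_fun.obtain_independent_family[OF real_fun_independent_indicators
        card_image[OF inj_on_subset[OF inj_indicator_singleton subset_UNIV]]
        indicators_subset_span_bary_interp[OF assms(2,4)]]
    unfolding V_def by blast
  have "affinely_independent_family (card V) (\<lambda>i v. bary_interp CC v (x i)) (V - {v0})"
    using affinely_independent_bary_interp[OF assms(2,3)] x indep unfolding V_def by blast
  moreover have "card (V - {v0}) + 1 = card V"
    using card.remove[OF finite_cover_vertices[OF assms(2)] assms(3)] unfolding V_def by simp
  moreover have "\<forall>i\<in>{1..card V}. x i \<in> Y"
    using x by blast
  ultimately show ?thesis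
    unfolding V_def[symmetric] by auto
qed

end
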